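(* Let $\alpha,\beta,\gamma\in\mathbb{C}$ and $k\in\mathbb{N}$, and consider the difference equation $$z_{n+1}=\frac{\alpha+\beta z_{n-k}}{\gamma-z_n},\qquad n=0,1,2,\ldots,$$ with complex initial conditions $z_{-k},\dots,z_{-1},z_0$. Let $s=\sqrt{(\beta-\gamma)^2-4\alpha}=\sqrt{-4\alpha+\beta^2-2\beta\gamma+\gamma^2}$ and let $\bar z_2=\frac{1}{2}\left(s-\beta+\gamma\right)$, which is a fixed point of the equation. If $$\left|\frac{2\beta}{-s+\beta+\gamma}\right|+\left|\frac{\gamma\left(s-\beta+\gamma\right)-2\alpha}{2(\alpha+\beta\gamma)}\right|<1,$$ then $\bar z_2$ is locally asymptotically stable.
   Context: Here $\sqrt{\cdot}$ denotes a fixed complex square root, used consistently in all occurrences. A fixed point $\bar z$ of $z_{n+1}=f(z_n,\dots,z_{n-k})$ is a point with $\bar z=f(\bar z,\dots,\bar z)$. It is locally asymptotically stable if for every $\epsilon>0$ there is $\delta>0$ such that $|z_{-k}-\bar z|+\dots+|z_0-\bar z|<\delta$ implies $|z_n-\bar z|<\epsilon$ for all $n\ge -k$ (and solutions converge to $\bar z$), as determined via the linearization of the equation at $\bar z$. *)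

theory Defs
  imports "HOL-Analysis.Analysis"
begin

text \<open>A solution of z(n+1) = (alpha + beta z(n-k)) / (gamma - z(n)), n = 0,1,2,...,
  is encoded as x :: nat => complex with x i = z(i - k); so x 0, ..., x k are the
  initial conditions z(-k), ..., z(0), and the recurrence reads
  x (n + k + 1) = (alpha + beta * x n) / (gamma - x (n + k)).\<close>

definition is_solution :: "complex \<Rightarrow> complex \<Rightarrow> complex \<Rightarrow> nat \<Rightarrow> (nat \<Rightarrow> complex) \<Rightarrow> bool" where
  "is_solution \<alpha> \<beta> \<gamma> k x \<longleftrightarrow>
     (\<forall>n. x (n + k + 1) = (\<alpha> + \<beta> * x n) / (\<gamma> - x (n + k)))"

definition is_fixed_point :: "complex \<Rightarrow> complex \<Rightarrow> complex \<Rightarrow> complex \<Rightarrow> bool" where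
  "is_fixed_point \<alpha> \<beta> \<gamma> zb \<longleftrightarrow> zb = (\<alpha> + \<beta> * zb) / (\<gamma> - zb)"

definition locally_asymptotically_stable ::
    "complex \<Rightarrow> complex \<Rightarrow> complex \<Rightarrow> nat \<Rightarrow> complex \<Rightarrow> bool" where
  "locally_asymptotically_stable \<alpha> \<beta> \<gamma> k zb \<longleftrightarrow>
     (\<forall>\<epsilon>>0. \<exists>\<delta>>0. \<forall>x. is_solution \<alpha> \<beta> \<gamma> k x \<and> (\<Sum>i\<le>k. norm (x i - zb)) < \<delta>
          \<longrightarrow> (\<forall>n. norm (x n - zb) < \<epsilon>)) \<and>
     (\<exists>\<eta>>0. \<forall>x. is_solution \<alpha> \<beta> \<gamma> k x \<and> (\<Sum>i\<le>k. norm (x i - zb)) < \<eta>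
          \<longrightarrow> x \<longlonglongrightarrow> zb)"

end

theory Submission
  imports Defs
begin

text \<open>Write \<open>D = \<gamma> - z\<close> for a fixed point \<open>z\<close>. The deviation \<open>e\<^sub>n = z\<^sub>n - z\<close> obeys the exact
  identity \<open>e\<^sub>n\<^sub>+\<^sub>1 = (\<beta> e\<^sub>n\<^sub>-\<^sub>k + z e\<^sub>n) / (D - e\<^sub>n)\<close>. The hypothesis of the theorem is the
  linearized stability condition \<open>|\<beta>| + |z| < |D|\<close> in disguise, so for small deviations the
  denominator stays away from zero and every step of \<open>k + 1\<close> iterations contracts the
  deviation by a fixed factor \<open>c < 1\<close>; hence \<open>|e\<^sub>n| \<le> (\<Sum>i\<le>k. |e\<^sub>i|) c\<^bsup>n div (k+1)\<^esup>\<close>.\<close>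

lemma is_fixed_point_iff:
  assumes "\<gamma> \<noteq> z"
  shows "is_fixed_point \<alpha> \<beta> \<gamma> z \<longleftrightarrow> z * (\<gamma> - z) = \<alpha> + \<beta> * z"
  using assms unfolding is_fixed_point_def by (auto simp: field_simps)

lemma fixed_point_of_discriminant_root:
  fixes \<alpha> \<beta> \<gamma> s :: complex
  assumes "s\<^sup>2 = (\<beta> - \<gamma>)\<^sup>2 - 4 * \<alpha>"
  shows "(s - \<beta> + \<gamma>) / 2 * (\<gamma> - (s - \<beta> + \<gamma>) / 2) = \<alpha> + \<beta> * ((s - \<beta> + \<gamma>) / 2)"
  using assms by (simp add: field_simps power2_eq_square) algebra

lemma fixed_point_ratio:
  fixes \<alpha> \<beta> \<gamma> z :: complex
  assumes fp: "z * (\<gamma> - z) = \<alpha> + \<beta> * z" and "\<gamma> \<noteq> z" and "\<alpha> + \<beta> * \<gamma> \<noteq> 0"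
  shows "(\<gamma> * z - \<alpha>) / (\<alpha> + \<beta> * \<gamma>) = z / (\<gamma> - z)"
proof -
  have "(\<gamma> * z - \<alpha>) * (\<gamma> - z) = z * (\<alpha> + \<beta> * \<gamma>)"
    using fp by algebra
  then show ?thesis
    using assms(2,3) by (simp add: frac_eq_eq)
qed

lemma fixed_point_deviation:
  fixes \<alpha> \<beta> \<gamma> z y w :: complex
  assumes fp: "z * (\<gamma> - z) = \<alpha> + \<beta> * z" and w: "\<gamma> \<noteq> w"
  shows "(\<alpha> + \<beta> * y) / (\<gamma> - w) - z = (\<beta> * (y - z) + z * (w - z)) / (\<gamma> - w)"
proof -
  have "\<alpha> + \<beta> * y - z * (\<gamma> - w) = \<beta> * (y - z) + z * (w - z)"
    using fp by (simp add: algebra_simps)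
  then show ?thesis
    using w by (simp add: field_simps)
qed

lemma fixed_point_deviation_step:
  fixes \<alpha> \<beta> \<gamma> z y w :: complex and T r :: real
  assumes fp: "z * (\<gamma> - z) = \<alpha> + \<beta> * z" and r: "r < norm (\<gamma> - z)"
    and y: "norm (y - z) \<le> T" and w: "norm (w - z) \<le> T" and T: "T \<le> r"
  shows "norm ((\<alpha> + \<beta> * y) / (\<gamma> - w) - z) \<le> (norm \<beta> + norm z) / (norm (\<gamma> - z) - r) * T"
proof -
  have "norm (\<gamma> - z) - r \<le> norm (\<gamma> - z) - norm (w - z)"
    using w T by simp
  also have "\<dots> \<le> norm (\<gamma> - w)"
    using norm_triangle_ineq2[of "\<gamma> - z" "w - z"] by simp
  finally have den: "norm (\<gamma> - z) - r \<le> norm (\<gamma> - w)" .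
  have den_pos: "0 < norm (\<gamma> - z) - r"
    using r by simp
  have w_ne: "\<gamma> \<noteq> w"
    using den den_pos by auto
  have "norm (\<beta> * (y - z) + z * (w - z)) \<le> norm \<beta> * norm (y - z) + norm z * norm (w - z)"
    by (metis norm_mult norm_triangle_ineq)
  also have "\<dots> \<le> (norm \<beta> + norm z) * T"
    using y w by (simp add: distrib_right add_mono mult_left_mono)
  finally have num: "norm (\<beta> * (y - z) + z * (w - z)) \<le> (norm \<beta> + norm z) * T" .
  have "norm ((\<alpha> + \<beta> * y) / (\<gamma> - w) - z) = norm (\<beta> * (y - z) + z * (w - z)) / norm (\<gamma> - w)"
    using fixed_point_deviation[OF fp w_ne] by (simp add: norm_divide)
  also have "\<dots> \<le> norm (\<beta> * (y - z) + z * (w - z)) / (norm (\<gamma> - z) - r)"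
    using den den_pos by (simp add: frac_le)
  also have "\<dots> \<le> (norm \<beta> + norm z) * T / (norm (\<gamma> - z) - r)"
    using num den_pos by (simp add: divide_right_mono)
  finally show ?thesis
    by simp
qed

lemma solution_deviation_decay:
  fixes x :: "nat \<Rightarrow> complex" and \<alpha> \<beta> \<gamma> z :: complex and r c :: real
  assumes fp: "z * (\<gamma> - z) = \<alpha> + \<beta> * z" and sol: "is_solution \<alpha> \<beta> \<gamma> k x"
    and r: "r < norm (\<gamma> - z)"
    and c: "c = (norm \<beta> + norm z) / (norm (\<gamma> - z) - r)" and c_le_1: "c \<le> 1"
    and init: "(\<Sum>i\<le>k. norm (x i - z)) \<le> r"
  shows "norm (x n - z) \<le> (\<Sum>i\<le>k. norm (x i - z)) * c ^ (n div (k + 1))"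
proof (induction n rule: less_induct)
  case (less n)
  define B where "B = (\<Sum>i\<le>k. norm (x i - z))"
  have B_nonneg: "0 \<le> B"
    unfolding B_def by (simp add: sum_nonneg)
  have c_nonneg: "0 \<le> c"
    using c r by simp
  show ?case
  proof (cases "n \<le> k")
    case True
    have "norm (x n - z) \<le> (\<Sum>i\<le>k. norm (x i - z))"
      using True by (intro member_le_sum[of n "{..k}" "\<lambda>i. norm (x i - z)"]) simp_all
    then show ?thesis
      using True by simp
  next
    case False
    then have "n = (n - k - 1) + k + 1"
      by simp
    then obtain m where n: "n = m + k + 1"
      by blast
    define T where "T = B * c ^ (m div (k + 1))"
    have "T \<le> B"
      unfolding T_def using B_nonneg c_nonneg c_le_1 by (simp add: mult_left_le power_le_one)
    then have T_le: "T \<le> r"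
      using init unfolding B_def by simp
    have dev_m: "norm (x m - z) \<le> T"
      using less.IH[of m] n unfolding T_def B_def by simp
    have "norm (x (m + k) - z) \<le> B * c ^ ((m + k) div (k + 1))"
      using less.IH[of "m + k"] n unfolding B_def by simp
    also have "\<dots> \<le> T"
      unfolding T_def using B_nonneg c_nonneg c_le_1
      by (intro mult_left_mono power_decreasing div_le_mono) auto
    finally have dev_mk: "norm (x (m + k) - z) \<le> T" .
    have "x n = (\<alpha> + \<beta> * x m) / (\<gamma> - x (m + k))"
      using sol n unfolding is_solution_def by blast
    then have "norm (x n - z) \<le> c * T"
      using fixed_point_deviation_step[OF fp r dev_m dev_mk T_le] c by simp
    also have "n div (k + 1) = Suc (m div (k + 1))"
      using n div_add_self2[of "k + 1" m] by (simp add: add.assoc)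
    then have "c * T = B * c ^ (n div (k + 1))"
      unfolding T_def by (simp add: ac_simps)
    finally show ?thesis
      unfolding B_def .
  qed
qed

lemma locally_asymptotically_stableI:
  fixes z :: complex and r c :: real
  assumes r: "0 < r" and c: "0 \<le> c" "c < 1"
    and decay: "\<And>x n. is_solution \<alpha> \<beta> \<gamma> k x \<Longrightarrow> (\<Sum>i\<le>k. norm (x i - z)) < r
      \<Longrightarrow> norm (x n - z) \<le> (\<Sum>i\<le>k. norm (x i - z)) * c ^ (n div (k + 1))"
  shows "locally_asymptotically_stable \<alpha> \<beta> \<gamma> k z"
  unfolding locally_asymptotically_stable_def
proof (intro conjI allI impI)
  fix \<epsilon> :: real
  assume "0 < \<epsilon>"
  show "\<exists>\<delta>>0. \<forall>x. is_solution \<alpha> \<beta> \<gamma> k x \<and> (\<Sum>i\<le>k. norm (x i - z)) < \<delta>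
          \<longrightarrow> (\<forall>n. norm (x n - z) < \<epsilon>)"
  proof (intro exI[of _ "min \<epsilon> r"] conjI allI impI)
    fix x n
    assume x: "is_solution \<alpha> \<beta> \<gamma> k x \<and> (\<Sum>i\<le>k. norm (x i - z)) < min \<epsilon> r"
    have "norm (x n - z) \<le> (\<Sum>i\<le>k. norm (x i - z)) * c ^ (n div (k + 1))"
      using decay x by simp
    also have "\<dots> \<le> (\<Sum>i\<le>k. norm (x i - z))"
      using c by (simp add: sum_nonneg mult_left_le power_le_one)
    finally show "norm (x n - z) < \<epsilon>"
      using x by simp
  qed (use \<open>0 < \<epsilon>\<close> r in simp)
next
  have power_div: "(\<lambda>n. c ^ (n div (k + 1))) \<longlonglongrightarrow> 0"
    using filterlim_compose[OF LIMSEQ_power_zero filterlim_at_top_div_const_nat, of c "k + 1"] c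
    by (simp add: o_def)
  show "\<exists>\<eta>>0. \<forall>x. is_solution \<alpha> \<beta> \<gamma> k x \<and> (\<Sum>i\<le>k. norm (x i - z)) < \<eta> \<longrightarrow> x \<longlonglongrightarrow> z"
  proof (intro exI[of _ r] conjI allI impI)
    fix x
    assume x: "is_solution \<alpha> \<beta> \<gamma> k x \<and> (\<Sum>i\<le>k. norm (x i - z)) < r"
    have "(\<lambda>n. x n - z) \<longlonglongrightarrow> 0"
    proof (rule Lim_null_comparison)
      show "\<forall>\<^sub>F n in sequentially. norm (x n - z) \<le> (\<Sum>i\<le>k. norm (x i - z)) * c ^ (n div (k + 1))"
        using decay x by simp
      show "(\<lambda>n. (\<Sum>i\<le>k. norm (x i - z)) * c ^ (n div (k + 1))) \<longlonglongrightarrow> 0"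
        using tendsto_mult_right_zero[OF power_div] by simp
    qed
    then show "x \<longlonglongrightarrow> z"
      by (simp add: LIM_zero_iff)
  qed (use r in simp)
qed

lemma locally_asymptotically_stable_fixed_point:
  fixes \<alpha> \<beta> \<gamma> z :: complex
  assumes fp: "z * (\<gamma> - z) = \<alpha> + \<beta> * z" and dominant: "norm \<beta> + norm z < norm (\<gamma> - z)"
  shows "locally_asymptotically_stable \<alpha> \<beta> \<gamma> k z"
proof -
  define r where "r = (norm (\<gamma> - z) - (norm \<beta> + norm z)) / 2"
  define c where "c = (norm \<beta> + norm z) / (norm (\<gamma> - z) - r)"
  have r_pos: "0 < r"
    using dominant unfolding r_def by simp
  have gap: "norm \<beta> + norm z < norm (\<gamma> - z) - r"
    using dominant unfolding r_def by (simp add: field_simps)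
  then have r_lt: "r < norm (\<gamma> - z)"
    using norm_ge_zero[of \<beta>] norm_ge_zero[of z] by linarith
  have "0 \<le> c" "c < 1"
    using gap r_lt unfolding c_def by simp_all
  then show ?thesis
    using r_pos solution_deviation_decay[OF fp _ r_lt c_def]
    by (intro locally_asymptotically_stableI[of r c]) auto
qed

theorem theorem2p2:
  fixes \<alpha> \<beta> \<gamma> s :: complex and k :: nat
  assumes hs: "s\<^sup>2 = (\<beta> - \<gamma>)\<^sup>2 - 4 * \<alpha>"
    and hden1: "- s + \<beta> + \<gamma> \<noteq> 0"
    and hden2: "\<alpha> + \<beta> * \<gamma> \<noteq> 0"
    and hcond: "norm (2 * \<beta> / (- s + \<beta> + \<gamma>))
              + norm ((\<gamma> * (s - \<beta> + \<gamma>) - 2 * \<alpha>) / (2 * (\<alpha> + \<beta> * \<gamma>))) < 1"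
  shows "is_fixed_point \<alpha> \<beta> \<gamma> ((s - \<beta> + \<gamma>) / 2)
       \<and> locally_asymptotically_stable \<alpha> \<beta> \<gamma> k ((s - \<beta> + \<gamma>) / 2)"
proof -
  define z where "z = (s - \<beta> + \<gamma>) / 2"
  have D: "- s + \<beta> + \<gamma> = 2 * (\<gamma> - z)"
    unfolding z_def by (simp add: field_simps)
  have D_nonzero: "\<gamma> - z \<noteq> 0"
    using D hden1 by simp
  have fp: "z * (\<gamma> - z) = \<alpha> + \<beta> * z"
    using fixed_point_of_discriminant_root[OF hs] unfolding z_def .
  have "(\<gamma> * z - \<alpha>) / (\<alpha> + \<beta> * \<gamma>) = z / (\<gamma> - z)"
    using fixed_point_ratio[OF fp] D_nonzero hden2 by simp
  moreover have "\<gamma> * (s - \<beta> + \<gamma>) - 2 * \<alpha> = 2 * (\<gamma> * z - \<alpha>)"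
    unfolding z_def by (simp add: field_simps)
  ultimately have "(\<gamma> * (s - \<beta> + \<gamma>) - 2 * \<alpha>) / (2 * (\<alpha> + \<beta> * \<gamma>)) = z / (\<gamma> - z)"
    by (simp only: mult_divide_mult_cancel_left_if) simp
  moreover have "2 * \<beta> / (- s + \<beta> + \<gamma>) = \<beta> / (\<gamma> - z)"
    unfolding D by (rule mult_divide_mult_cancel_left) simp
  ultimately have "norm \<beta> + norm z < norm (\<gamma> - z)"
    using hcond D_nonzero by (simp add: norm_divide field_simps)
  then show ?thesis
    using fp D_nonzero is_fixed_point_iff locally_asymptotically_stable_fixed_point
    unfolding z_def[symmetric] by auto
qed

end
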